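(* There are absolute constants $C,c_1,c_2>0$ such that the following holds. Let $k\ge1$ be an integer and let $f\in\ell^2(V,w)$ be nonnegative with $\mathrm{vol}(\mathrm{supp}(f))\le\mathrm{vol}(V)/2$ and $\mathcal R(f)>0$, and set $\delta=\phi(f)^2/\mathcal R(f)$. Then at least one of the following holds: (i) $\phi(f)\le Ck\,\mathcal R(f)$; (ii) there exist $k$ disjointly supported nonzero functions $f_1,\dots,f_k\in\ell^2(V,w)$ such that for all $i$, $\mathrm{supp}(f_i)\subseteq\mathrm{supp}(f)$ and $\mathcal R(f_i)\le Ck^2\,\mathcal R(f)/\delta$; moreover, for each $i$ there are reals $0<a_i<b_i$ with $c_1a_i/k\le b_i-a_i\le c_2a_i/k$ such that $\mathrm{supp}(f_i)\subseteq\{v: a_i\le f(v)\le b_i\}$.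
   Context: $G=(V,E,w)$ finite undirected, positive edge weights, $w(v)=\sum_{u\sim v}w(u,v)\ge1$, $\mathrm{vol}(S)=\sum_{v\in S}w(v)$, $\mathrm{supp}(f)=\{v:f(v)\ne0\}$. $\|f\|_w^2=\sum_vw(v)f(v)^2$, $\mathcal R(f)=\sum_{\{u,v\}\in E}w(u,v)(f(u)-f(v))^2/\|f\|_w^2$. Conductance $\phi(S)=w(E(S,\overline S))/\min\{\mathrm{vol}(S),\mathrm{vol}(\overline S)\}$; $V_f(t)=\{v:f(v)\ge t\}$; $\phi(f)=\min\{\phi(V_f(t)):\emptyset\ne V_f(t)\ne V\}$. Functions are disjointly supported if their supports are pairwise disjoint. *)

theory Defs
  imports Complex_Main
begin

text \<open>A weighted finite undirected graph is given by a finite vertex set V and a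
  symmetric nonnegative weight function W; {u,v} is an edge iff W u v > 0.
  Vertices are natural numbers (so that constants can be absolute over all graphs).\<close>

definition wgraph :: "nat set \<Rightarrow> (nat \<Rightarrow> nat \<Rightarrow> real) \<Rightarrow> bool" where
  "wgraph V W \<longleftrightarrow> finite V \<and> (\<forall>u\<in>V. \<forall>v\<in>V. W u v = W v u \<and> W u v \<ge> 0)
     \<and> (\<forall>v\<in>V. (\<Sum>u\<in>V. W v u) \<ge> 1)"

definition wdeg :: "nat set \<Rightarrow> (nat \<Rightarrow> nat \<Rightarrow> real) \<Rightarrow> nat \<Rightarrow> real" where
  "wdeg V W v = (\<Sum>u\<in>V. W u v)"

definition vol :: "nat set \<Rightarrow> (nat \<Rightarrow> nat \<Rightarrow> real) \<Rightarrow> nat set \<Rightarrow> real" where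
  "vol V W S = (\<Sum>v\<in>S. wdeg V W v)"

definition supp :: "nat set \<Rightarrow> (nat \<Rightarrow> real) \<Rightarrow> nat set" where
  "supp V f = {v\<in>V. f v \<noteq> 0}"

definition wnorm2 :: "nat set \<Rightarrow> (nat \<Rightarrow> nat \<Rightarrow> real) \<Rightarrow> (nat \<Rightarrow> real) \<Rightarrow> real" where
  "wnorm2 V W f = (\<Sum>v\<in>V. wdeg V W v * (f v)\<^sup>2)"

text \<open>Sum over unordered edges {u,v}: half the ordered double sum (loop terms vanish).\<close>
definition rayleigh :: "nat set \<Rightarrow> (nat \<Rightarrow> nat \<Rightarrow> real) \<Rightarrow> (nat \<Rightarrow> real) \<Rightarrow> real" where
  "rayleigh V W f = ((\<Sum>u\<in>V. \<Sum>v\<in>V. W u v * (f u - f v)\<^sup>2) / 2) / wnorm2 V W f"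

definition cut_weight :: "nat set \<Rightarrow> (nat \<Rightarrow> nat \<Rightarrow> real) \<Rightarrow> nat set \<Rightarrow> real" where
  "cut_weight V W S = (\<Sum>u\<in>S. \<Sum>v\<in>V - S. W u v)"

definition conductance :: "nat set \<Rightarrow> (nat \<Rightarrow> nat \<Rightarrow> real) \<Rightarrow> nat set \<Rightarrow> real" where
  "conductance V W S = cut_weight V W S / min (vol V W S) (vol V W (V - S))"

definition level_set :: "nat set \<Rightarrow> (nat \<Rightarrow> real) \<Rightarrow> real \<Rightarrow> nat set" where
  "level_set V f t = {v\<in>V. f v \<ge> t}"

definition fconductance :: "nat set \<Rightarrow> (nat \<Rightarrow> nat \<Rightarrow> real) \<Rightarrow> (nat \<Rightarrow> real) \<Rightarrow> real" where
  "fconductance V W f = Min {conductance V W (level_set V f t) | t.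
      level_set V f t \<noteq> {} \<and> level_set V f t \<noteq> V}"

end

theory Submission
  imports Defs
begin

text \<open>Cut the range of \<open>f\<close> into geometric windows \<open>[a r\<^sup>5\<^sup>m, a r\<^sup>5\<^sup>m\<^sup>+\<^sup>5]\<close> with
  \<open>r = 1 + 1/k\<close>, and on each window place a trapezoidal bump of \<open>f\<close>; bumps of distinct
  windows are disjointly supported and have exactly the required support ratio. If \<open>k\<close> of
  them have Rayleigh quotient at most \<open>C k\<^sup>2 R(f)/\<delta>\<close> we are done. Otherwise apply the co-area
  inequality to \<open>F(f)\<close>, where \<open>F\<close> adds up squared ramps inside the bad windows: since fewer
  than \<open>k\<close> windows are good, \<open>F(x) \<ge> e\<^sup>-\<^sup>3\<^sup>0 x\<^sup>2\<close>, so the left side is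
  \<open>\<ge> e\<^sup>-\<^sup>3\<^sup>0 \<phi>(f) \<parallel>f\<parallel>\<^sup>2\<close>, while the increments of \<open>F\<close> along edges are paid for by
  \<open>O(k)\<close> times the energy of \<open>f\<close> plus, for each bad window, the small volume of its
  plateau. Comparing gives \<open>\<phi>(f) \<le> C k R(f)\<close>.\<close>

section \<open>Clipping to consecutive windows\<close>

definition clip :: "real \<Rightarrow> real \<Rightarrow> real \<Rightarrow> real" where
  "clip a b x = min (max x a) b"

lemma clip_mono: "a \<le> b \<Longrightarrow> y \<le> x \<Longrightarrow> clip a b y \<le> clip a b x"
  unfolding clip_def by auto

lemma clip_diff_le: "a \<le> b \<Longrightarrow> y \<le> x \<Longrightarrow> clip a b x - clip a b y \<le> x - y"
  unfolding clip_def by (auto simp: min_def max_def)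

lemma clip_power2:
  "0 \<le> c \<Longrightarrow> c \<le> d \<Longrightarrow> 0 \<le> z \<Longrightarrow> clip (c\<^sup>2) (d\<^sup>2) (z\<^sup>2) = (clip c d z)\<^sup>2"
  unfolding clip_def
  by (cases "z \<le> c"; cases "z \<le> d")
    (auto simp: min_def max_def intro: antisym dest: power_mono[where n=2] power2_le_imp_le)

text \<open>For consecutive windows \<open>[A m, B m]\<close> the clipped increments of \<open>y \<le> x\<close> cover disjoint
  pieces of \<open>[y, x]\<close>.\<close>

lemma sum_clip_diff_le_min:
  assumes "\<And>m. A m \<le> B m" "\<And>m. B m \<le> A (Suc m)" and "y \<le> x"
  shows "(\<Sum>m<n. clip (A m) (B m) x - clip (A m) (B m) y) \<le> max 0 (min x (A n) - y)"
proof (induction n)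
  case (Suc n)
  then show ?case using assms(1)[of n] assms(2)[of n] assms(3) unfolding clip_def
    by (auto simp: min_def max_def split: if_splits)
qed simp

lemma sum_clip_diff_le:
  assumes "\<And>m. A m \<le> B m" "\<And>m. B m \<le> A (Suc m)" and "y \<le> x"
  shows "(\<Sum>m<n. clip (A m) (B m) x - clip (A m) (B m) y) \<le> x - y"
  using sum_clip_diff_le_min[of A B y x n, OF assms] \<open>y \<le> x\<close> by linarith

lemma sum_clip_diff_power2_le:
  assumes AB: "\<And>m. A m \<le> B m" "\<And>m. B m \<le> A (Suc m)"
  shows "(\<Sum>m<n. (clip (A m) (B m) x - clip (A m) (B m) y)\<^sup>2) \<le> (x - y)\<^sup>2"
proof -
  have ordered: "(\<Sum>m<n. (clip (A m) (B m) x - clip (A m) (B m) y)\<^sup>2) \<le> (x - y)\<^sup>2"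
    if "y \<le> x" for x y
  proof -
    have "(\<Sum>m<n. (clip (A m) (B m) x - clip (A m) (B m) y)\<^sup>2)
        \<le> (\<Sum>m<n. (x - y) * (clip (A m) (B m) x - clip (A m) (B m) y))"
    proof (rule sum_mono)
      fix m
      have "0 \<le> clip (A m) (B m) x - clip (A m) (B m) y"
        using clip_mono[OF AB(1) \<open>y \<le> x\<close>] by simp
      with clip_diff_le[OF AB(1) \<open>y \<le> x\<close>]
      show "(clip (A m) (B m) x - clip (A m) (B m) y)\<^sup>2
          \<le> (x - y) * (clip (A m) (B m) x - clip (A m) (B m) y)"
        by (simp add: power2_eq_square mult_right_mono)
    qed
    also have "\<dots> = (x - y) * (\<Sum>m<n. clip (A m) (B m) x - clip (A m) (B m) y)"
      by (simp add: sum_distrib_left)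
    also have "\<dots> \<le> (x - y) * (x - y)"
      using sum_clip_diff_le[of A B y x n, OF AB that] that by (intro mult_left_mono) auto
    finally show ?thesis by (simp add: power2_eq_square)
  qed
  show ?thesis
    using ordered[of y x] ordered[of x y] by (cases "y \<le> x") (auto simp: power2_commute)
qed

definition energy :: "'a set \<Rightarrow> ('a \<Rightarrow> 'a \<Rightarrow> real) \<Rightarrow> ('a \<Rightarrow> real) \<Rightarrow> real" where
  "energy V W g = (\<Sum>u\<in>V. \<Sum>v\<in>V. W u v * (g u - g v)\<^sup>2)"

lemma rayleigh_energy: "rayleigh V W f = energy V W f / 2 / wnorm2 V W f"
  unfolding rayleigh_def energy_def ..

lemma energy_nonneg: "(\<And>u v. u \<in> V \<Longrightarrow> v \<in> V \<Longrightarrow> 0 \<le> W u v) \<Longrightarrow> 0 \<le> energy V W g"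
  unfolding energy_def by (intro sum_nonneg mult_nonneg_nonneg) auto

lemma energy_mono:
  assumes "\<And>u v. u \<in> V \<Longrightarrow> v \<in> V \<Longrightarrow> 0 \<le> W u v"
    and "\<And>u v. u \<in> V \<Longrightarrow> v \<in> V \<Longrightarrow> (g u - g v)\<^sup>2 \<le> (h u - h v)\<^sup>2"
  shows "energy V W g \<le> energy V W h"
  unfolding energy_def using assms by (intro sum_mono mult_left_mono) auto

lemma sum_energy_clip_le:
  assumes W: "\<And>u v. u \<in> V \<Longrightarrow> v \<in> V \<Longrightarrow> 0 \<le> W u v"
    and AB: "\<And>m. A m \<le> B m" "\<And>m. B m \<le> A (Suc m)"
  shows "(\<Sum>m<n. energy V W (\<lambda>v. clip (A m) (B m) (f v))) \<le> energy V W f"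
proof -
  have "(\<Sum>m<n. energy V W (\<lambda>v. clip (A m) (B m) (f v)))
      = (\<Sum>u\<in>V. \<Sum>v\<in>V. W u v * (\<Sum>m<n. (clip (A m) (B m) (f u) - clip (A m) (B m) (f v))\<^sup>2))"
    unfolding energy_def sum_distrib_left by (subst sum.swap) (simp add: sum.swap[of _ "{..<n}"])
  also have "\<dots> \<le> energy V W f"
    unfolding energy_def
    using W sum_clip_diff_power2_le[of A B, OF AB] by (intro sum_mono mult_left_mono) auto
  finally show ?thesis .
qed

section \<open>The co-area inequality\<close>

text \<open>Peeling off the lowest positive value of \<open>F\<close> writes \<open>F\<close> as a step function at that level,
  for which the claim is the hypothesis, plus a monotone function with fewer positive values.\<close>

lemma coarea_inequality:
  fixes f d :: "'a \<Rightarrow> real" and W :: "'a \<Rightarrow> 'a \<Rightarrow> real" and F :: "real \<Rightarrow> real"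
  assumes fin: "finite V" and f0: "\<And>v. v \<in> V \<Longrightarrow> 0 \<le> f v"
    and cut: "\<And>t. t > 0 \<Longrightarrow> \<phi> * (\<Sum>v\<in>V. if t \<le> f v then d v else 0)
        \<le> (\<Sum>u\<in>V. \<Sum>v\<in>V. if t \<le> f u \<and> f v < t then W u v else 0)"
    and mono: "\<And>x y. 0 \<le> x \<Longrightarrow> x \<le> y \<Longrightarrow> F x \<le> F y" and F0: "F 0 = 0"
  shows "\<phi> * (\<Sum>v\<in>V. d v * F (f v))
    \<le> (\<Sum>u\<in>V. \<Sum>v\<in>V. W u v * (if f v < f u then F (f u) - F (f v) else 0))"
  using mono F0
proof (induction "card {x\<in>f ` V. 0 < F x}" arbitrary: F rule: less_induct)
  case less
  define P where "P = {x\<in>f ` V. 0 < F x}"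
  have finP: "finite P" unfolding P_def using fin by auto
  have Fnn: "0 \<le> F (f v)" if "v \<in> V" for v using less.prems f0 that by force
  show ?case
  proof (cases "P = {}")
    case True
    then have F_zero: "F (f v) = 0" if "v \<in> V" for v
      using Fnn[OF that] that unfolding P_def by force
    then have "(\<Sum>u\<in>V. \<Sum>v\<in>V. W u v * (if f v < f u then F (f u) - F (f v) else 0)) = 0"
      by (intro sum.neutral ballI) simp
    then show ?thesis using F_zero by simp
  next
    case False
    define t where "t = Min P"
    have tP: "t \<in> P" and tmin: "\<And>x. x \<in> P \<Longrightarrow> t \<le> x"
      unfolding t_def using finP False by auto
    have tpos: "0 < t"
      using tP f0 less.prems(2) unfolding P_def by (cases "t = 0") fastforce+
    define c where "c = F t"
    have cpos: "0 < c" using tP unfolding c_def P_def by auto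
    define F' where "F' = (\<lambda>x. if x < t then 0 else F x - c)"
    have "{x\<in>f ` V. 0 < F' x} \<subset> P"
      using tP cpos unfolding P_def F'_def c_def by (auto split: if_splits)
    then have fewer: "card {x\<in>f ` V. 0 < F' x} < card P"
      by (rule psubset_card_mono[OF finP])
    have IH: "\<phi> * (\<Sum>v\<in>V. d v * F' (f v))
        \<le> (\<Sum>u\<in>V. \<Sum>v\<in>V. W u v * (if f v < f u then F' (f u) - F' (f v) else 0))"
      by (rule less.hyps[OF fewer[unfolded P_def]])
        (use less.prems tpos in \<open>auto simp: F'_def c_def\<close>)
    have split: "F (f v) = F' (f v) + c * (if t \<le> f v then 1 else 0)" if "v \<in> V" for v
    proof (cases "t \<le> f v")
      case False
      then have "f v \<notin> P" using tmin by force
      then have "F (f v) = 0" using Fnn[OF that] that unfolding P_def by auto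
      then show ?thesis using False unfolding F'_def by simp
    qed (simp add: F'_def)
    have lhs: "(\<Sum>v\<in>V. d v * F (f v))
        = (\<Sum>v\<in>V. d v * F' (f v)) + c * (\<Sum>v\<in>V. if t \<le> f v then d v else 0)"
    proof -
      have "(\<Sum>v\<in>V. d v * F (f v))
          = (\<Sum>v\<in>V. d v * F' (f v) + c * (if t \<le> f v then d v else 0))"
        by (rule sum.cong) (auto simp: split algebra_simps)
      then show ?thesis by (simp add: sum.distrib sum_distrib_left)
    qed
    have "W u v * (if f v < f u then F (f u) - F (f v) else 0)
        = W u v * (if f v < f u then F' (f u) - F' (f v) else 0)
          + c * (if t \<le> f u \<and> f v < t then W u v else 0)" if "u \<in> V" "v \<in> V" for u v
      using split[OF that(1)] split[OF that(2)] by (auto simp: algebra_simps)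
    then have rhs: "(\<Sum>u\<in>V. \<Sum>v\<in>V. W u v * (if f v < f u then F (f u) - F (f v) else 0))
        = (\<Sum>u\<in>V. \<Sum>v\<in>V. W u v * (if f v < f u then F' (f u) - F' (f v) else 0))
          + c * (\<Sum>u\<in>V. \<Sum>v\<in>V. if t \<le> f u \<and> f v < t then W u v else 0)"
      by (simp add: sum.distrib sum_distrib_left cong: sum.cong)
    have "c * (\<phi> * (\<Sum>v\<in>V. if t \<le> f v then d v else 0))
        \<le> c * (\<Sum>u\<in>V. \<Sum>v\<in>V. if t \<le> f u \<and> f v < t then W u v else 0)"
      using cut[OF tpos] cpos by (intro mult_left_mono) auto
    then show ?thesis using IH unfolding lhs rhs by (simp add: algebra_simps)
  qed
qed

lemma wdeg_sym: "wgraph V W \<Longrightarrow> v \<in> V \<Longrightarrow> wdeg V W v = (\<Sum>u\<in>V. W v u)"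
  unfolding wdeg_def by (rule sum.cong) (auto simp: wgraph_def)

lemma wdeg_ge1: "wgraph V W \<Longrightarrow> v \<in> V \<Longrightarrow> 1 \<le> wdeg V W v"
  using wdeg_sym[of V W v] unfolding wgraph_def by auto

lemma wgraph_weight_nonneg: "wgraph V W \<Longrightarrow> u \<in> V \<Longrightarrow> v \<in> V \<Longrightarrow> 0 \<le> W u v"
  unfolding wgraph_def by auto

lemma wdeg_nonneg: "wgraph V W \<Longrightarrow> v \<in> V \<Longrightarrow> 0 \<le> wdeg V W v"
  using wdeg_ge1 by fastforce

lemma vol_mono: "wgraph V W \<Longrightarrow> S \<subseteq> T \<Longrightarrow> T \<subseteq> V \<Longrightarrow> vol V W S \<le> vol V W T"
  unfolding vol_def
  by (intro sum_mono2) (auto simp: wgraph_def intro: finite_subset wdeg_nonneg)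

lemma vol_pos: "wgraph V W \<Longrightarrow> S \<subseteq> V \<Longrightarrow> S \<noteq> {} \<Longrightarrow> 0 < vol V W S"
  unfolding vol_def
  by (intro sum_pos) (auto simp: wgraph_def intro: finite_subset wdeg_ge1[THEN less_le_trans[OF zero_less_one]])

lemma vol_Diff: "wgraph V W \<Longrightarrow> S \<subseteq> V \<Longrightarrow> vol V W (V - S) = vol V W V - vol V W S"
  unfolding vol_def wgraph_def by (simp add: sum_diff)

lemma wnorm2_pos: "wgraph V W \<Longrightarrow> supp V g \<noteq> {} \<Longrightarrow> 0 < wnorm2 V W g"
proof -
  assume g: "wgraph V W" and "supp V g \<noteq> {}"
  then obtain v where v: "v \<in> V" "g v \<noteq> 0" unfolding supp_def by auto
  have "0 < wdeg V W v * (g v)\<^sup>2" using wdeg_ge1[OF g v(1)] v(2) by simp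
  then show ?thesis
    unfolding wnorm2_def using g v(1)
    by (intro sum_pos2[where i=v]) (auto simp: wgraph_def wdeg_nonneg)
qed

lemma supp_nonempty_of_rayleigh_pos: "0 < rayleigh V W f \<Longrightarrow> supp V f \<noteq> {}"
proof
  assume "0 < rayleigh V W f" "supp V f = {}"
  then show False unfolding rayleigh_def wnorm2_def supp_def by simp
qed

lemma fconductance_le_conductance:
  assumes "finite V" and "level_set V f t \<noteq> {}" and "level_set V f t \<noteq> V"
  shows "fconductance V W f \<le> conductance V W (level_set V f t)"
proof -
  have "{conductance V W (level_set V f t) | t. level_set V f t \<noteq> {} \<and> level_set V f t \<noteq> V}
      \<subseteq> conductance V W ` Pow V"
    unfolding level_set_def by auto
  then have "finite {conductance V W (level_set V f t) | t. level_set V f t \<noteq> {} \<and> level_set V f t \<noteq> V}"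
    by (rule finite_subset) (simp add: \<open>finite V\<close>)
  then show ?thesis unfolding fconductance_def using assms(2,3) by (intro Min_le) auto
qed

lemma fconductance_level_set_ineq:
  assumes g: "wgraph V W" and half: "vol V W (supp V f) \<le> vol V W V / 2" and t: "0 < t"
  shows "fconductance V W f * (\<Sum>v\<in>V. if t \<le> f v then wdeg V W v else 0)
      \<le> (\<Sum>u\<in>V. \<Sum>v\<in>V. if t \<le> f u \<and> f v < t then W u v else 0)"
proof -
  have fin: "finite V" using g unfolding wgraph_def by auto
  define S where "S = level_set V f t"
  have SV: "S \<subseteq> V" and S_supp: "S \<subseteq> supp V f"
    using t unfolding S_def level_set_def supp_def by auto
  have vol_S: "(\<Sum>v\<in>V. if t \<le> f v then wdeg V W v else 0) = vol V W S"
    unfolding vol_def S_def level_set_def using fin by (simp add: sum.inter_filter)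
  have "(\<Sum>u\<in>V. \<Sum>v\<in>V. if t \<le> f u \<and> f v < t then W u v else 0)
      = (\<Sum>u\<in>V. if t \<le> f u then (\<Sum>v\<in>V. if f v < t then W u v else 0) else 0)"
    by (auto intro: sum.cong)
  also have "\<dots> = cut_weight V W S"
    unfolding cut_weight_def S_def level_set_def using fin
    by (simp add: sum.inter_filter set_diff_eq not_le)
  finally have cut_S: "(\<Sum>u\<in>V. \<Sum>v\<in>V. if t \<le> f u \<and> f v < t then W u v else 0) = cut_weight V W S" .
  show ?thesis
    unfolding vol_S cut_S
  proof (cases "S = {}")
    case False
    have volS: "vol V W S \<le> vol V W (supp V f)"
      using vol_mono[OF g S_supp] unfolding supp_def by auto
    have "S \<noteq> V"
      using vol_pos[OF g SV False] volS half by auto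
    then have "fconductance V W f \<le> conductance V W S"
      unfolding S_def using fin False by (intro fconductance_le_conductance) (auto simp: S_def)
    moreover have "min (vol V W S) (vol V W (V - S)) = vol V W S"
      using vol_Diff[OF g SV] volS half by simp
    ultimately show "fconductance V W f * vol V W S \<le> cut_weight V W S"
      using vol_pos[OF g SV False] by (simp add: conductance_def pos_le_divide_eq)
  qed (simp add: vol_def cut_weight_def)
qed

section \<open>Bumps and squared ramps\<close>

definition bump :: "real \<Rightarrow> real \<Rightarrow> real \<Rightarrow> real \<Rightarrow> real" where
  "bump A B h x = max 0 (min (min (x - A) (B - x)) h)"

lemma bump_diff_power2_le:
  "A \<le> B \<Longrightarrow> (bump A B h x - bump A B h y)\<^sup>2 \<le> (clip A B x - clip A B y)\<^sup>2"
  unfolding bump_def clip_def abs_le_square_iff[symmetric]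
  by (auto simp: min_def max_def abs_if)

lemma bump_nonzero: "bump A B h x \<noteq> 0 \<Longrightarrow> A < x \<and> x < B"
  unfolding bump_def by (auto simp: min_def max_def split: if_splits)

lemma bump_plateau: "0 \<le> h \<Longrightarrow> A + h \<le> x \<Longrightarrow> x + h \<le> B \<Longrightarrow> bump A B h x = h"
  unfolding bump_def by (simp add: min_def max_def)

definition ramp_sq :: "real \<Rightarrow> real \<Rightarrow> real \<Rightarrow> real" where
  "ramp_sq c d x = clip (c\<^sup>2) (d\<^sup>2) (x\<^sup>2) - c\<^sup>2"

lemma ramp_sq_nonneg: "c\<^sup>2 \<le> d\<^sup>2 \<Longrightarrow> 0 \<le> ramp_sq c d x"
  unfolding ramp_sq_def clip_def by auto

lemma ramp_sq_mono: "c\<^sup>2 \<le> d\<^sup>2 \<Longrightarrow> 0 \<le> y \<Longrightarrow> y \<le> x \<Longrightarrow> ramp_sq c d y \<le> ramp_sq c d x"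
  unfolding ramp_sq_def using clip_mono[of "c\<^sup>2" "d\<^sup>2" "y\<^sup>2" "x\<^sup>2"] by (simp add: power_mono)

lemma ramp_sq_zero: "c\<^sup>2 \<le> d\<^sup>2 \<Longrightarrow> ramp_sq c d 0 = 0"
  unfolding ramp_sq_def clip_def by simp

lemma ramp_sq_saturated: "c\<^sup>2 \<le> d\<^sup>2 \<Longrightarrow> d\<^sup>2 \<le> x\<^sup>2 \<Longrightarrow> ramp_sq c d x = d\<^sup>2 - c\<^sup>2"
  unfolding ramp_sq_def clip_def by simp

lemma ramp_sq_diff_le:
  assumes "0 \<le> c" "c \<le> d" "0 \<le> y" "y \<le> x" "0 < \<mu>"
  shows "ramp_sq c d x - ramp_sq c d y \<le> d * (\<mu> + (clip c d x - clip c d y)\<^sup>2 / \<mu>)"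
proof -
  define X Y where "X = clip c d x" and "Y = clip c d y"
  have "Y \<le> X" "X \<le> d" "0 \<le> Y"
    using clip_mono[of c d y x] assms unfolding X_def Y_def clip_def by auto
  have "ramp_sq c d x - ramp_sq c d y = (X - Y) * (X + Y)"
    using clip_power2 assms unfolding ramp_sq_def X_def Y_def by (simp add: power2_eq_square algebra_simps)
  also have "\<dots> \<le> (X - Y) * (2 * d)"
    using \<open>Y \<le> X\<close> \<open>X \<le> d\<close> by (intro mult_left_mono) auto
  also have "\<dots> = d * (2 * (X - Y))" by simp
  also have "\<dots> \<le> d * (\<mu> + (X - Y)\<^sup>2 / \<mu>)"
  proof -
    have "2 * (X - Y) * \<mu> \<le> \<mu>\<^sup>2 + (X - Y)\<^sup>2"
      using zero_le_power2[of "\<mu> - (X - Y)"] by (simp add: power2_eq_square algebra_simps)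
    then have "2 * (X - Y) \<le> \<mu> + (X - Y)\<^sup>2 / \<mu>"
      using \<open>0 < \<mu>\<close> by (simp add: field_simps power2_eq_square)
    then show ?thesis using assms by (intro mult_left_mono) auto
  qed
  finally show ?thesis unfolding X_def Y_def .
qed

text \<open>With \<open>r = 1 + 1/k\<close>: if \<open>y < x/r\<close>, the total increment \<open>x\<^sup>2 - y\<^sup>2 \<le> 2x(x - y)\<close> is at most
  \<open>2(k + 1)(x - y)\<^sup>2\<close>; otherwise only windows with \<open>c \<le> x \<le> r d\<close> are crossed, and each of them
  is paid for by the AM-GM estimate above.\<close>

lemma sum_ramp_sq_diff_le:
  fixes c d \<mu> :: "nat \<Rightarrow> real"
  assumes k: "1 \<le> k"
    and c0: "\<And>m. 0 \<le> c m" and cd: "\<And>m. c m \<le> d m" and dc: "\<And>m. d m \<le> c (Suc m)"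
    and B: "B \<subseteq> {..<n}" and \<mu>: "\<And>m. 0 < \<mu> m" and yx: "0 \<le> y" "y \<le> x"
  shows "(\<Sum>m\<in>B. ramp_sq (c m) (d m) x - ramp_sq (c m) (d m) y)
    \<le> 2 * (real k + 1) * (x - y)\<^sup>2
      + (\<Sum>m\<in>B. if c m \<le> x \<and> x \<le> (1 + 1 / real k) * d m
                 then d m * (\<mu> m + (clip (c m) (d m) x - clip (c m) (d m) y)\<^sup>2 / \<mu> m) else 0)"
    (is "?lhs \<le> _ + ?windows")
proof -
  define r where "r = 1 + 1 / real k"
  have r0: "0 < r" unfolding r_def by (simp add: add_pos_nonneg)
  have sq: "(c m)\<^sup>2 \<le> (d m)\<^sup>2" "(d m)\<^sup>2 \<le> (c (Suc m))\<^sup>2" for m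
    using c0[of m] cd[of m] dc[of m] by (auto intro: power_mono)
  have terms_nonneg: "0 \<le> ramp_sq (c m) (d m) x - ramp_sq (c m) (d m) y" for m
    using ramp_sq_mono[OF sq(1)] yx by simp
  have windows_nonneg: "0 \<le> ?windows"
    using order_trans[OF c0 cd] less_imp_le[OF \<mu>] by (intro sum_nonneg) simp
  show ?thesis
  proof (cases "r * y < x")
    case True
    have "?lhs \<le> (\<Sum>m<n. ramp_sq (c m) (d m) x - ramp_sq (c m) (d m) y)"
      using B terms_nonneg by (intro sum_mono2) auto
    also have "\<dots> \<le> x\<^sup>2 - y\<^sup>2"
      using sum_clip_diff_le[of "\<lambda>m. (c m)\<^sup>2" "\<lambda>m. (d m)\<^sup>2" "y\<^sup>2" "x\<^sup>2" n] sq yx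
      by (simp add: ramp_sq_def power_mono)
    also have "\<dots> \<le> 2 * (real k + 1) * (x - y)\<^sup>2"
    proof -
      have "x \<le> (real k + 1) * (x - y)"
        using True k unfolding r_def by (simp add: field_simps)
      then have "(x - y) * (x + y) \<le> (x - y) * (2 * ((real k + 1) * (x - y)))"
        using yx by (intro mult_left_mono) auto
      then show ?thesis by (simp add: power2_eq_square algebra_simps)
    qed
    finally show ?thesis using windows_nonneg by linarith
  next
    case False
    have "ramp_sq (c m) (d m) x - ramp_sq (c m) (d m) y
        \<le> (if c m \<le> x \<and> x \<le> r * d m
            then d m * (\<mu> m + (clip (c m) (d m) x - clip (c m) (d m) y)\<^sup>2 / \<mu> m) else 0)" for m
    proof (cases "c m \<le> x \<and> x \<le> r * d m")
      case True
      then show ?thesis using ramp_sq_diff_le[OF c0 cd yx \<mu>] by simp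
    next
      case outside: False
      have "x < c m \<or> r * d m < r * y"
        using outside False by auto
      then have "x < c m \<or> d m < y"
        using r0 by simp
      then have "x\<^sup>2 \<le> (c m)\<^sup>2 \<and> y\<^sup>2 \<le> (c m)\<^sup>2 \<or> (d m)\<^sup>2 \<le> y\<^sup>2 \<and> (d m)\<^sup>2 \<le> x\<^sup>2"
        using yx order_trans[OF c0 cd, of m] by (auto intro: power_mono)
      then have "ramp_sq (c m) (d m) x = ramp_sq (c m) (d m) y"
        using sq(1)[of m] unfolding ramp_sq_def clip_def by auto
      then show ?thesis using outside by (simp only: if_False)
    qed
    then have "?lhs \<le> ?windows" unfolding r_def by (intro sum_mono) auto
    moreover have "0 \<le> 2 * (real k + 1) * (x - y)\<^sup>2" by simp
    ultimately show ?thesis by linarith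
  qed
qed

lemma sum_weights_indicator:
  "wgraph V W \<Longrightarrow> (\<Sum>u\<in>V. \<Sum>v\<in>V. if P u then W u v else 0) = vol V W {u\<in>V. P u}"
proof -
  assume g: "wgraph V W"
  have "(\<Sum>u\<in>V. \<Sum>v\<in>V. if P u then W u v else 0) = (\<Sum>u\<in>V. if P u then wdeg V W u else 0)"
    using wdeg_sym[OF g] by (intro sum.cong) auto
  then show ?thesis
    unfolding vol_def using g by (simp add: sum.inter_filter wgraph_def)
qed

lemma weighted_ramp_sq_increment_le:
  fixes c d \<mu> :: "nat \<Rightarrow> real"
  assumes k: "1 \<le> k"
    and c0: "\<And>m. 0 \<le> c m" and cd: "\<And>m. c m \<le> d m" and dc: "\<And>m. d m \<le> c (Suc m)"
    and B: "B \<subseteq> {..<n}" and \<mu>: "\<And>m. 0 < \<mu> m" and w: "0 \<le> w" and xy: "0 \<le> x" "0 \<le> y"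
  shows "w * (if y < x then (\<Sum>m\<in>B. ramp_sq (c m) (d m) x) - (\<Sum>m\<in>B. ramp_sq (c m) (d m) y) else 0)
    \<le> 2 * (real k + 1) * (w * (x - y)\<^sup>2)
      + (\<Sum>m\<in>B. d m * \<mu> m * (if c m \<le> x \<and> x \<le> (1 + 1 / real k) * d m then w else 0)
               + d m / \<mu> m * (w * (clip (c m) (d m) x - clip (c m) (d m) y)\<^sup>2))"
    (is "_ \<le> _ + (\<Sum>m\<in>B. ?cost m)")
proof -
  define P where "P m \<longleftrightarrow> c m \<le> x \<and> x \<le> (1 + 1 / real k) * d m" for m
  define cl where "cl m = (clip (c m) (d m) x - clip (c m) (d m) y)\<^sup>2" for m
  have d0: "0 \<le> d m" for m using order_trans[OF c0 cd] .
  have cost_nonneg: "0 \<le> ?cost m" for m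
    using w d0[of m] less_imp_le[OF \<mu>[of m]] by simp
  show ?thesis
  proof (cases "y < x")
    case True
    have "(\<Sum>m\<in>B. ramp_sq (c m) (d m) x) - (\<Sum>m\<in>B. ramp_sq (c m) (d m) y)
        \<le> 2 * (real k + 1) * (x - y)\<^sup>2 + (\<Sum>m\<in>B. if P m then d m * (\<mu> m + cl m / \<mu> m) else 0)"
      unfolding P_def cl_def sum_subtractf[symmetric]
      using sum_ramp_sq_diff_le[where c=c and d=d and \<mu>=\<mu>, OF k c0 cd dc B \<mu>] xy True by simp
    then have "w * ((\<Sum>m\<in>B. ramp_sq (c m) (d m) x) - (\<Sum>m\<in>B. ramp_sq (c m) (d m) y))
        \<le> 2 * (real k + 1) * (w * (x - y)\<^sup>2) + (\<Sum>m\<in>B. w * (if P m then d m * (\<mu> m + cl m / \<mu> m) else 0))"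
      using mult_left_mono[OF _ w] by (fastforce simp: algebra_simps sum_distrib_left)
    also have "\<dots> \<le> 2 * (real k + 1) * (w * (x - y)\<^sup>2) + (\<Sum>m\<in>B. ?cost m)"
      using w d0 less_imp_le[OF \<mu>] unfolding P_def cl_def
      by (intro add_left_mono sum_mono) (simp add: algebra_simps add_divide_distrib)
    finally show ?thesis using True by simp
  next
    case False
    then show ?thesis using w cost_nonneg by (simp add: sum_nonneg)
  qed
qed

lemma coarea_rhs_ramp_sq_le:
  fixes c d \<mu> :: "nat \<Rightarrow> real"
  assumes g: "wgraph V W" and f0: "\<And>v. v \<in> V \<Longrightarrow> 0 \<le> f v" and k: "1 \<le> k"
    and c0: "\<And>m. 0 \<le> c m" and cd: "\<And>m. c m \<le> d m" and dc: "\<And>m. d m \<le> c (Suc m)"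
    and B: "B \<subseteq> {..<n}" and \<mu>: "\<And>m. 0 < \<mu> m"
  defines "F \<equiv> \<lambda>x. \<Sum>m\<in>B. ramp_sq (c m) (d m) x"
  shows "(\<Sum>u\<in>V. \<Sum>v\<in>V. W u v * (if f v < f u then F (f u) - F (f v) else 0))
    \<le> 2 * (real k + 1) * energy V W f
      + (\<Sum>m\<in>B. d m * \<mu> m * vol V W {u\<in>V. c m \<le> f u \<and> f u \<le> (1 + 1 / real k) * d m}
               + d m / \<mu> m * energy V W (\<lambda>v. clip (c m) (d m) (f v)))"
proof -
  define h where "h m u v = d m * \<mu> m * (if c m \<le> f u \<and> f u \<le> (1 + 1 / real k) * d m then W u v else 0)
      + d m / \<mu> m * (W u v * (clip (c m) (d m) (f u) - clip (c m) (d m) (f v))\<^sup>2)" for m u v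
  have "(\<Sum>u\<in>V. \<Sum>v\<in>V. W u v * (if f v < f u then F (f u) - F (f v) else 0))
      \<le> (\<Sum>u\<in>V. \<Sum>v\<in>V. 2 * (real k + 1) * (W u v * (f u - f v)\<^sup>2) + (\<Sum>m\<in>B. h m u v))"
    unfolding F_def h_def using wgraph_weight_nonneg[OF g] f0
    by (intro sum_mono weighted_ramp_sq_increment_le[where c=c and d=d and \<mu>=\<mu>, OF k c0 cd dc B \<mu>]) auto
  also have "\<dots> = (\<Sum>u\<in>V. \<Sum>v\<in>V. 2 * (real k + 1) * (W u v * (f u - f v)\<^sup>2))
      + (\<Sum>m\<in>B. \<Sum>u\<in>V. \<Sum>v\<in>V. h m u v)"
    by (simp add: sum.distrib, subst sum.swap[of _ _ B], rule sum.cong[OF refl], rule sum.swap)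
  also have "\<dots> = 2 * (real k + 1) * energy V W f
      + (\<Sum>m\<in>B. d m * \<mu> m * vol V W {u\<in>V. c m \<le> f u \<and> f u \<le> (1 + 1 / real k) * d m}
               + d m / \<mu> m * energy V W (\<lambda>v. clip (c m) (d m) (f v)))"
    unfolding h_def energy_def sum_weights_indicator[OF g, symmetric]
    by (simp add: sum.distrib sum_distrib_left)
  finally show ?thesis .
qed

section \<open>Geometric windows\<close>

definition grid :: "nat \<Rightarrow> real \<Rightarrow> nat \<Rightarrow> real" where
  "grid k a0 i = a0 * (1 + 1 / real k) ^ i"

lemma grid_add: "grid k a0 (i + j) = grid k a0 i * (1 + 1 / real k) ^ j"
  unfolding grid_def by (simp add: power_add)

lemma grid_Suc: "grid k a0 (Suc i) = grid k a0 i + grid k a0 i / real k"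
  unfolding grid_def by (simp add: algebra_simps)

lemma grid_pos: "0 < a0 \<Longrightarrow> 0 < grid k a0 i"
  unfolding grid_def by (simp add: add_pos_nonneg)

lemma grid_mono: "0 < a0 \<Longrightarrow> i \<le> j \<Longrightarrow> grid k a0 i \<le> grid k a0 j"
  unfolding grid_def by (simp add: power_increasing)

lemma one_plus_inverse_power_le_exp: "(1 + 1 / real k) ^ j \<le> exp (real j / real k)"
proof -
  have "(1 + 1 / real k) ^ j \<le> exp (1 / real k) ^ j"
    using exp_ge_add_one_self[of "1 / real k"] by (intro power_mono) auto
  then show ?thesis by (simp add: exp_of_nat_mult[symmetric])
qed

lemma obtain_grid_block:
  assumes a0: "0 < a0" and x: "grid k a0 (5 * q) \<le> x" "x < grid k a0 (5 * n)"
  obtains p where "q \<le> p" "p < n" "grid k a0 (5 * p) \<le> x" "x < grid k a0 (5 * p + 5)"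
proof -
  define P where "P = {p. grid k a0 (5 * p) \<le> x}"
  have "P \<subseteq> {..<n}"
  proof
    fix p assume "p \<in> P"
    show "p \<in> {..<n}"
    proof (rule ccontr)
      assume "p \<notin> {..<n}"
      then have "grid k a0 (5 * n) \<le> grid k a0 (5 * p)" by (intro grid_mono[OF a0]) auto
      then show False using x(2) \<open>p \<in> P\<close> unfolding P_def by auto
    qed
  qed
  then have finP: "finite P" by (rule finite_subset) simp
  have qP: "q \<in> P" unfolding P_def using x(1) by simp
  define p where "p = Max P"
  have "p \<in> P" "q \<le> p" "Suc p \<notin> P"
    unfolding p_def using Max_in[OF finP] Max_ge[OF finP] qP by fastforce+
  then show ?thesis
    using that \<open>P \<subseteq> {..<n}\<close> unfolding P_def by (auto simp: add.commute)
qed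

lemma grid_power2_mono: "0 < a0 \<Longrightarrow> i \<le> j \<Longrightarrow> (grid k a0 i)\<^sup>2 \<le> (grid k a0 j)\<^sup>2"
  using grid_mono[of a0 i j k] grid_pos[of a0 k i] by (simp add: power_mono)

lemma ramp_sq_grid_saturated_ge:
  assumes k: "1 \<le> k" and a0: "0 < a0" and x: "grid k a0 (i + 1) \<le> x"
  shows "2 / real k * (grid k a0 i)\<^sup>2 \<le> ramp_sq (grid k a0 i) (grid k a0 (i + 1)) x"
proof -
  define c where "c = grid k a0 i"
  have "(grid k a0 (i + 1))\<^sup>2 \<le> x\<^sup>2"
    using x grid_pos[OF a0, of k "i + 1"] by (intro power_mono) auto
  then have "ramp_sq c (grid k a0 (i + 1)) x = (c + c / real k)\<^sup>2 - c\<^sup>2"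
    using ramp_sq_saturated grid_power2_mono[OF a0, of i "i + 1" k] grid_Suc[of k a0 i]
    unfolding c_def by simp
  also have "\<dots> = 2 / real k * c\<^sup>2 + c\<^sup>2 / (real k)\<^sup>2"
    using k by (simp add: power2_eq_square field_simps)
  finally show ?thesis unfolding c_def by simp
qed

text \<open>Below \<open>x\<close> lie at least \<open>2k\<close> windows within a factor \<open>e\<^sup>1\<^sup>5\<close> of \<open>x\<close>; more than half of
  them belong to \<open>B\<close>, and each of these contributes its full ramp.\<close>

lemma sum_ramp_sq_lower_bound:
  assumes k: "1 \<le> k" and a0: "0 < a0" and B: "finite B" and few: "card ({..<n} - B) < k"
    and x: "grid k a0 (10 * k) \<le> x" "x < grid k a0 (5 * n)"
  shows "exp (-30) * x\<^sup>2 \<le> (\<Sum>m\<in>B. ramp_sq (grid k a0 (5 * m + 2)) (grid k a0 (5 * m + 3)) x)"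
proof -
  obtain p where p: "2 * k \<le> p" "p < n" "grid k a0 (5 * p) \<le> x" "x < grid k a0 (5 * p + 5)"
    using obtain_grid_block[OF a0, of k "2 * k" x n] x by auto
  define I where "I = {p - 2 * k..<p}"
  define b0 where "b0 = grid k a0 (5 * (p - 2 * k))"
  have "card (I - B) \<le> card ({..<n} - B)"
    by (rule card_mono) (use p(2) in \<open>auto simp: I_def\<close>)
  moreover have "card I = card (I \<inter> B) + card (I - B)"
    by (rule card_Int_Diff) (simp add: I_def)
  ultimately have "k \<le> card (I \<inter> B)"
    using few p(1) unfolding I_def by simp
  then have "2 * b0\<^sup>2 \<le> real (card (I \<inter> B)) * (2 / real k * b0\<^sup>2)"
    using k by (simp add: field_simps mult_right_mono)
  also have "\<dots> \<le> (\<Sum>m\<in>I \<inter> B. ramp_sq (grid k a0 (5 * m + 2)) (grid k a0 (5 * m + 3)) x)"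
  proof (rule sum_bounded_below)
    fix m assume "m \<in> I \<inter> B"
    then have m: "p - 2 * k \<le> m" "m < p" unfolding I_def by auto
    have "2 / real k * b0\<^sup>2 \<le> 2 / real k * (grid k a0 (5 * m + 2))\<^sup>2"
      unfolding b0_def using m grid_power2_mono[OF a0] by (intro mult_left_mono) auto
    also have "\<dots> \<le> ramp_sq (grid k a0 (5 * m + 2)) (grid k a0 (5 * m + 3)) x"
      using ramp_sq_grid_saturated_ge[OF k a0, of "5 * m + 2" x] m p(3)
        grid_mono[OF a0, of "5 * m + 3" "5 * p" k] by (simp add: numeral_3_eq_3)
    finally show "2 / real k * b0\<^sup>2 \<le> \<dots>" .
  qed
  also have "\<dots> \<le> (\<Sum>m\<in>B. ramp_sq (grid k a0 (5 * m + 2)) (grid k a0 (5 * m + 3)) x)"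
    using B grid_power2_mono[OF a0] by (intro sum_mono2 ramp_sq_nonneg) auto
  finally have lower: "2 * b0\<^sup>2 \<le> \<dots>" .
  have "x < b0 * (1 + 1 / real k) ^ (10 * k + 5)"
    using p(4) grid_add[of k a0 "5 * (p - 2 * k)" "10 * k + 5"] p(1) unfolding b0_def
    by (simp add: algebra_simps)
  also have "\<dots> \<le> b0 * exp 15"
  proof -
    have "real (10 * k + 5) / real k \<le> 15" using k by (simp add: field_simps)
    then have "(1 + 1 / real k) ^ (10 * k + 5) \<le> exp 15"
      using one_plus_inverse_power_le_exp[of k "10 * k + 5"] by (meson exp_le_cancel_iff order_trans)
    then show ?thesis using grid_pos[OF a0] unfolding b0_def by simp
  qed
  finally have "x\<^sup>2 \<le> (b0 * exp 15)\<^sup>2"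
    using p(3) grid_pos[OF a0, of k "5 * p"] by (intro power_mono) auto
  also have "\<dots> = exp 30 * b0\<^sup>2" by (simp add: power_mult_distrib power2_eq_square exp_add[symmetric])
  finally have "exp (-30) * x\<^sup>2 \<le> b0\<^sup>2" by (simp add: exp_minus field_simps)
  then show ?thesis using lower zero_le_power2[of b0] by linarith
qed

text \<open>Writing \<open>a\<^sub>i = grid k a0 i\<close>, window \<open>m\<close> spans the five grid steps from \<open>a\<^sub>5\<^sub>m\<close> to \<open>a\<^sub>5\<^sub>m\<^sub>+\<^sub>5\<close>. The bump rises with slope 1
  to its height \<open>a\<^sub>5\<^sub>m/k\<close> within the first step and stays flat on \<open>[a\<^sub>5\<^sub>m\<^sub>+\<^sub>2, a\<^sub>5\<^sub>m\<^sub>+\<^sub>4]\<close>, which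
  contains the ramp \<open>[a\<^sub>5\<^sub>m\<^sub>+\<^sub>2, a\<^sub>5\<^sub>m\<^sub>+\<^sub>3]\<close> together with the slack required by the AM-GM step.\<close>

definition window_bump :: "nat \<Rightarrow> real \<Rightarrow> (nat \<Rightarrow> real) \<Rightarrow> nat \<Rightarrow> nat \<Rightarrow> real" where
  "window_bump k a0 f m v =
    bump (grid k a0 (5 * m)) (grid k a0 (5 * m + 5)) (grid k a0 (5 * m) / real k) (f v)"

lemma supp_window_bump:
  "supp V (window_bump k a0 f m) \<subseteq> {v\<in>V. grid k a0 (5 * m) < f v \<and> f v < grid k a0 (5 * m + 5)}"
  unfolding supp_def window_bump_def using bump_nonzero by blast

lemma window_bump_plateau:
  assumes a0: "0 < a0" and v: "grid k a0 (5 * m + 2) \<le> f v" "f v \<le> (1 + 1 / real k) * grid k a0 (5 * m + 3)"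
  shows "window_bump k a0 f m v = grid k a0 (5 * m) / real k"
proof -
  have "grid k a0 (5 * m) + grid k a0 (5 * m) / real k \<le> f v"
    using grid_Suc[of k a0 "5 * m"] grid_mono[OF a0, of "Suc (5 * m)" "5 * m + 2" k] v(1) by simp
  moreover have "(1 + 1 / real k) * grid k a0 (5 * m + 3) = grid k a0 (5 * m + 4)"
    using grid_add[of k a0 "5 * m + 3" 1] by (simp add: mult.commute add.commute)
  moreover have "grid k a0 (5 * m) / real k \<le> grid k a0 (5 * m + 4) / real k"
    using grid_mono[OF a0, of "5 * m" "5 * m + 4" k] by (simp add: divide_right_mono)
  moreover have "grid k a0 (5 * m + 5) = grid k a0 (5 * m + 4) + grid k a0 (5 * m + 4) / real k"
    using grid_Suc[of k a0 "5 * m + 4"] by (simp add: eval_nat_numeral)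
  ultimately show ?thesis
    unfolding window_bump_def using v(2) grid_pos[OF a0, of k "5 * m"]
    by (intro bump_plateau) auto
qed

lemma wnorm2_window_bump_ge:
  assumes g: "wgraph V W" and a0: "0 < a0"
  shows "(grid k a0 (5 * m) / real k)\<^sup>2
      * vol V W {u\<in>V. grid k a0 (5 * m + 2) \<le> f u \<and> f u \<le> (1 + 1 / real k) * grid k a0 (5 * m + 3)}
    \<le> wnorm2 V W (window_bump k a0 f m)"
proof -
  let ?P = "{u\<in>V. grid k a0 (5 * m + 2) \<le> f u \<and> f u \<le> (1 + 1 / real k) * grid k a0 (5 * m + 3)}"
  have "(grid k a0 (5 * m) / real k)\<^sup>2 * vol V W ?P = (\<Sum>v\<in>?P. wdeg V W v * (window_bump k a0 f m v)\<^sup>2)"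
    unfolding vol_def sum_distrib_left using window_bump_plateau[OF a0] by (simp add: mult.commute)
  also have "\<dots> \<le> wnorm2 V W (window_bump k a0 f m)"
    unfolding wnorm2_def using g by (intro sum_mono2) (auto simp: wgraph_def wdeg_nonneg)
  finally show ?thesis .
qed

lemma sum_energy_window_bump_le:
  assumes g: "wgraph V W" and a0: "0 < a0"
  shows "(\<Sum>m<n. energy V W (window_bump k a0 f m)) \<le> energy V W f"
proof -
  let ?clip = "\<lambda>m v. clip (grid k a0 (5 * m)) (grid k a0 (5 * m + 5)) (f v)"
  have "energy V W (window_bump k a0 f m) \<le> energy V W (?clip m)" for m
  proof (intro energy_mono wgraph_weight_nonneg[OF g])
    show "(window_bump k a0 f m u - window_bump k a0 f m v)\<^sup>2 \<le> (?clip m u - ?clip m v)\<^sup>2" for u v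
      unfolding window_bump_def using grid_mono[OF a0, of "5 * m" "5 * m + 5" k]
      by (intro bump_diff_power2_le) simp
  qed
  then have "(\<Sum>m<n. energy V W (window_bump k a0 f m)) \<le> (\<Sum>m<n. energy V W (?clip m))"
    by (rule sum_mono)
  also have "\<dots> \<le> energy V W f"
    using wgraph_weight_nonneg[OF g] grid_mono[OF a0]
    by (intro sum_energy_clip_le[where A = "\<lambda>m. grid k a0 (5 * m)"]) (auto simp: add.commute)
  finally show ?thesis .
qed

lemma bad_window_plateau_bound:
  assumes g: "wgraph V W" and a0: "0 < a0" and k: "1 \<le> k" and \<kappa>: "0 < \<kappa>"
    and bad: "(real k / \<kappa>)\<^sup>2 * wnorm2 V W (window_bump k a0 f m) \<le> energy V W (window_bump k a0 f m) / 2"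
  shows "grid k a0 (5 * m + 3) * (grid k a0 (5 * m) / \<kappa>)
      * vol V W {u\<in>V. grid k a0 (5 * m + 2) \<le> f u \<and> f u \<le> (1 + 1 / real k) * grid k a0 (5 * m + 3)}
    \<le> 4 * \<kappa> * energy V W (window_bump k a0 f m)"
proof -
  let ?A = "grid k a0 (5 * m)" and ?r = "1 + 1 / real k"
  let ?vol = "vol V W {u\<in>V. grid k a0 (5 * m + 2) \<le> f u \<and> f u \<le> ?r * grid k a0 (5 * m + 3)}"
  have r3: "?r ^ 3 \<le> 8" "0 \<le> ?r ^ 3"
    using power_mono[of ?r 2 3] k by auto
  have "grid k a0 (5 * m + 3) * (?A / \<kappa>) * ?vol = ?r ^ 3 * \<kappa> * ((real k / \<kappa>)\<^sup>2 * ((?A / real k)\<^sup>2 * ?vol))"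
    using grid_add[of k a0 "5 * m" 3] k \<kappa> by (simp add: power2_eq_square field_simps)
  also have "\<dots> \<le> ?r ^ 3 * \<kappa> * (energy V W (window_bump k a0 f m) / 2)"
    using mult_left_mono[OF wnorm2_window_bump_ge[OF g a0], of "(real k / \<kappa>)\<^sup>2" k m f] bad r3 \<kappa>
    by (intro mult_left_mono) auto
  also have "\<dots> \<le> 8 * \<kappa> * (energy V W (window_bump k a0 f m) / 2)"
    using r3 \<kappa> energy_nonneg[OF wgraph_weight_nonneg[OF g]] by (intro mult_right_mono) auto
  finally show ?thesis by simp
qed

section \<open>Few good windows force small conductance\<close>

lemma wnorm2_le_sum_ramp_sq:
  fixes f :: "nat \<Rightarrow> real"
  assumes g: "wgraph V W" and k: "1 \<le> k" and a0: "0 < a0" and f0: "\<And>v. v \<in> V \<Longrightarrow> 0 \<le> f v"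
    and B: "B \<subseteq> {..<n}" and few: "card ({..<n} - B) < k"
    and low: "\<And>v. v \<in> V \<Longrightarrow> 0 < f v \<Longrightarrow> grid k a0 (10 * k) \<le> f v"
    and top: "\<And>v. v \<in> V \<Longrightarrow> f v < grid k a0 (5 * n)"
  shows "exp (-30) * wnorm2 V W f
    \<le> (\<Sum>v\<in>V. wdeg V W v * (\<Sum>m\<in>B. ramp_sq (grid k a0 (5 * m + 2)) (grid k a0 (5 * m + 3)) (f v)))"
proof -
  have finB: "finite B" using B finite_subset by blast
  have "exp (-30) * (f v)\<^sup>2 \<le> (\<Sum>m\<in>B. ramp_sq (grid k a0 (5 * m + 2)) (grid k a0 (5 * m + 3)) (f v))"
    if v: "v \<in> V" for v
  proof (cases "f v = 0")
    case True
    then show ?thesis using grid_power2_mono[OF a0] by (simp add: ramp_sq_zero)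
  next
    case False
    then show ?thesis
      using sum_ramp_sq_lower_bound[OF k a0 finB few] low[OF v] top[OF v] f0[OF v] by simp
  qed
  then have "(\<Sum>v\<in>V. wdeg V W v * (exp (-30) * (f v)\<^sup>2))
      \<le> (\<Sum>v\<in>V. wdeg V W v * (\<Sum>m\<in>B. ramp_sq (grid k a0 (5 * m + 2)) (grid k a0 (5 * m + 3)) (f v)))"
    by (intro sum_mono mult_left_mono) (auto simp: wdeg_nonneg[OF g])
  then show ?thesis
    unfolding wnorm2_def by (simp add: sum_distrib_left mult.left_commute)
qed

lemma sum_bad_window_costs_le:
  assumes g: "wgraph V W" and k: "1 \<le> k" and a0: "0 < a0" and \<kappa>: "0 < \<kappa>" and B: "B \<subseteq> {..<n}"
    and bad: "\<And>m. m \<in> B \<Longrightarrow>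
      (real k / \<kappa>)\<^sup>2 * wnorm2 V W (window_bump k a0 f m) \<le> energy V W (window_bump k a0 f m) / 2"
  shows "(\<Sum>m\<in>B. grid k a0 (5 * m + 3) * (grid k a0 (5 * m) / \<kappa>)
        * vol V W {u\<in>V. grid k a0 (5 * m + 2) \<le> f u \<and> f u \<le> (1 + 1 / real k) * grid k a0 (5 * m + 3)}
      + grid k a0 (5 * m + 3) / (grid k a0 (5 * m) / \<kappa>)
        * energy V W (\<lambda>v. clip (grid k a0 (5 * m + 2)) (grid k a0 (5 * m + 3)) (f v)))
    \<le> 12 * \<kappa> * energy V W f"
    (is "(\<Sum>m\<in>B. ?plateau m + ?ratio m * ?ramp m) \<le> _")
proof -
  have W0: "\<And>u v. u \<in> V \<Longrightarrow> v \<in> V \<Longrightarrow> 0 \<le> W u v" using wgraph_weight_nonneg[OF g] .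
  have "?ratio m = (1 + 1 / real k) ^ 3 * \<kappa>" for m
    using grid_add[of k a0 "5 * m" 3] grid_pos[OF a0, of k "5 * m"] \<kappa> by (simp add: field_simps)
  also have "\<dots> \<le> 8 * \<kappa>"
    using power_mono[of "1 + 1 / real k" 2 3] k \<kappa> by (intro mult_right_mono) auto
  finally have ramp: "?ratio m * ?ramp m \<le> 8 * \<kappa> * ?ramp m" for m
    by (intro mult_right_mono energy_nonneg W0)
  have "(\<Sum>m\<in>B. ?plateau m + ?ratio m * ?ramp m)
      \<le> (\<Sum>m\<in>B. 4 * \<kappa> * energy V W (window_bump k a0 f m) + 8 * \<kappa> * ?ramp m)"
    using bad_window_plateau_bound[OF g a0 k \<kappa> bad] ramp by (intro sum_mono add_mono) auto
  also have "\<dots> = 4 * \<kappa> * (\<Sum>m\<in>B. energy V W (window_bump k a0 f m)) + 8 * \<kappa> * (\<Sum>m\<in>B. ?ramp m)"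
    by (simp add: sum.distrib sum_distrib_left)
  also have "\<dots> \<le> 4 * \<kappa> * (\<Sum>m<n. energy V W (window_bump k a0 f m)) + 8 * \<kappa> * (\<Sum>m<n. ?ramp m)"
    using B \<kappa> by (intro add_mono mult_left_mono sum_mono2) (auto intro: energy_nonneg W0)
  also have "\<dots> \<le> 4 * \<kappa> * energy V W f + 8 * \<kappa> * energy V W f"
    using sum_energy_window_bump_le[OF g a0, where n=n and k=k and f=f] \<kappa>
      sum_energy_clip_le[where A="\<lambda>m. grid k a0 (5 * m + 2)" and B="\<lambda>m. grid k a0 (5 * m + 3)"
        and n=n and f=f, OF W0] grid_mono[OF a0]
    by (intro add_mono mult_left_mono) auto
  finally show ?thesis by simp
qed

text \<open>Co-area applied to \<open>F(f)\<close>, with \<open>F\<close> the sum of the squared ramps of the windows in \<open>B\<close>.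
  The weights \<open>\<mu>\<close> of the AM-GM step make each window cost \<open>O(\<kappa>)\<close> times energy, and
  \<open>\<kappa> = \<phi> e\<^sup>-\<^sup>3\<^sup>0/(48 R)\<close> is chosen so that this cost is absorbed into the left side.\<close>

lemma fconductance_le_of_few_good_windows:
  fixes f :: "nat \<Rightarrow> real" and a0 :: real
  assumes g: "wgraph V W" and k: "1 \<le> k" and f0: "\<And>v. v \<in> V \<Longrightarrow> 0 \<le> f v"
    and half: "vol V W (supp V f) \<le> vol V W V / 2"
    and R: "0 < rayleigh V W f" and \<phi>: "0 < fconductance V W f" and a0: "0 < a0"
    and low: "\<And>v. v \<in> V \<Longrightarrow> 0 < f v \<Longrightarrow> grid k a0 (10 * k) \<le> f v"
    and top: "\<And>v. v \<in> V \<Longrightarrow> f v < grid k a0 (5 * n)"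
    and B: "B \<subseteq> {..<n}" and few: "card ({..<n} - B) < k"
    and bad: "\<And>m. m \<in> B \<Longrightarrow>
      (48 * exp 30 * real k * rayleigh V W f / fconductance V W f)\<^sup>2 * wnorm2 V W (window_bump k a0 f m)
        \<le> energy V W (window_bump k a0 f m) / 2"
  shows "fconductance V W f \<le> 16 * exp 30 * real k * rayleigh V W f"
proof -
  define \<phi>' R N where "\<phi>' = fconductance V W f" and "R = rayleigh V W f" and "N = wnorm2 V W f"
  define \<kappa> where "\<kappa> = \<phi>' / (48 * exp 30 * R)"
  define c d \<mu> where "c m = grid k a0 (5 * m + 2)" and "d m = grid k a0 (5 * m + 3)"
    and "\<mu> m = grid k a0 (5 * m) / \<kappa>" for m
  define F where "F x = (\<Sum>m\<in>B. ramp_sq (c m) (d m) x)" for x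
  have \<kappa>0: "0 < \<kappa>" unfolding \<kappa>_def \<phi>'_def R_def using \<phi> R by simp
  have N0: "0 < N" unfolding N_def using wnorm2_pos[OF g supp_nonempty_of_rayleigh_pos[OF R]] .
  have c0: "0 \<le> c m" and cd: "c m \<le> d m" and dc: "d m \<le> c (Suc m)" and \<mu>0: "0 < \<mu> m" for m
    unfolding c_def d_def \<mu>_def using grid_pos[OF a0, of k] grid_mono[OF a0, of _ _ k] \<kappa>0
    by (auto intro: less_imp_le)
  have "\<phi>' * (exp (-30) * N) \<le> \<phi>' * (\<Sum>v\<in>V. wdeg V W v * F (f v))"
    using wnorm2_le_sum_ramp_sq[OF g k a0 f0 B few low top] \<phi>
    unfolding \<phi>'_def N_def F_def c_def d_def by (intro mult_left_mono) auto
  also have "\<dots> \<le> (\<Sum>u\<in>V. \<Sum>v\<in>V. W u v * (if f v < f u then F (f u) - F (f v) else 0))"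
  proof (unfold \<phi>'_def, rule coarea_inequality[OF _ f0 fconductance_level_set_ineq[OF g half]])
    have cd2: "(c m)\<^sup>2 \<le> (d m)\<^sup>2" for m using power_mono[OF cd c0] .
    show "finite V" using g unfolding wgraph_def by simp
    show "F 0 = 0" unfolding F_def using cd2 by (simp add: ramp_sq_zero)
    show "F x \<le> F y" if "0 \<le> x" "x \<le> y" for x y
      unfolding F_def using ramp_sq_mono[OF cd2] that by (intro sum_mono) auto
  qed
  also have "\<dots> \<le> 2 * (real k + 1) * energy V W f
      + (\<Sum>m\<in>B. d m * \<mu> m * vol V W {u\<in>V. c m \<le> f u \<and> f u \<le> (1 + 1 / real k) * d m}
               + d m / \<mu> m * energy V W (\<lambda>v. clip (c m) (d m) (f v)))"
    unfolding F_def
    by (rule coarea_rhs_ramp_sq_le[where c=c and d=d and \<mu>=\<mu> and f=f, OF g f0 k c0 cd dc B \<mu>0])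
  also have "\<dots> \<le> (2 * (real k + 1) + 12 * \<kappa>) * energy V W f"
  proof -
    have "real k / \<kappa> = 48 * exp 30 * real k * R / \<phi>'"
      unfolding \<kappa>_def using \<phi> R unfolding \<phi>'_def R_def by (simp add: field_simps)
    then show ?thesis
      unfolding c_def d_def \<mu>_def
      using sum_bad_window_costs_le[OF g k a0 \<kappa>0 B, of f] bad unfolding \<phi>'_def R_def
      by (simp add: algebra_simps)
  qed
  also have "\<dots> = (4 * (real k + 1) * R + 24 * \<kappa> * R) * N"
  proof -
    have "energy V W f = 2 * R * N" using N0 unfolding R_def N_def rayleigh_energy by simp
    then show ?thesis by (simp add: algebra_simps)
  qed
  finally have "\<phi>' * exp (-30) \<le> 4 * (real k + 1) * R + 24 * \<kappa> * R"
    using N0 by (simp add: mult.commute mult.left_commute)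
  moreover have "24 * \<kappa> * R = \<phi>' * exp (-30) / 2"
    unfolding \<kappa>_def using R unfolding R_def by (simp add: exp_minus field_simps)
  moreover have "(real k + 1) * R \<le> (2 * real k) * R"
    using k R unfolding R_def by (intro mult_right_mono) auto
  ultimately have "\<phi>' * exp (-30) \<le> 16 * real k * R" by linarith
  then show ?thesis
    unfolding \<phi>'_def R_def by (simp add: exp_minus field_simps)
qed

lemma many_good_windows:
  fixes f :: "nat \<Rightarrow> real" and a0 :: real
  assumes g: "wgraph V W" and k: "1 \<le> k" and f0: "\<And>v. v \<in> V \<Longrightarrow> 0 \<le> f v"
    and half: "vol V W (supp V f) \<le> vol V W V / 2" and R: "0 < rayleigh V W f"
    and big: "16 * exp 30 * real k * rayleigh V W f < fconductance V W f" and a0: "0 < a0"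
    and low: "\<And>v. v \<in> V \<Longrightarrow> 0 < f v \<Longrightarrow> grid k a0 (10 * k) \<le> f v"
    and top: "\<And>v. v \<in> V \<Longrightarrow> f v < grid k a0 (5 * n)"
  shows "k \<le> card {m\<in>{..<n}. supp V (window_bump k a0 f m) \<noteq> {} \<and>
      rayleigh V W (window_bump k a0 f m) \<le> (48 * exp 30 * real k * rayleigh V W f / fconductance V W f)\<^sup>2}"
    (is "k \<le> card ?G")
proof (rule ccontr)
  assume "\<not> k \<le> card ?G"
  moreover have "{..<n} - ({..<n} - ?G) = ?G" by auto
  ultimately have few: "card ({..<n} - ({..<n} - ?G)) < k" by simp
  have "0 \<le> 16 * exp 30 * real k * rayleigh V W f" using R by simp
  then have \<phi>: "0 < fconductance V W f" using big by linarith
  have "fconductance V W f \<le> 16 * exp 30 * real k * rayleigh V W f"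
  proof (rule fconductance_le_of_few_good_windows[OF g k f0 half R \<phi> a0 low top _ few])
    fix m assume "m \<in> {..<n} - ?G"
    then have bad: "supp V (window_bump k a0 f m) \<noteq> {} \<Longrightarrow>
        (48 * exp 30 * real k * rayleigh V W f / fconductance V W f)\<^sup>2 < rayleigh V W (window_bump k a0 f m)"
      by auto
    show "(48 * exp 30 * real k * rayleigh V W f / fconductance V W f)\<^sup>2
        * wnorm2 V W (window_bump k a0 f m) \<le> energy V W (window_bump k a0 f m) / 2"
    proof (cases "supp V (window_bump k a0 f m) = {}")
      case True
      then have "wnorm2 V W (window_bump k a0 f m) = 0" unfolding supp_def wnorm2_def by simp
      then show ?thesis using energy_nonneg[OF wgraph_weight_nonneg[OF g]] by simp
    next
      case False
      then show ?thesis
        using bad wnorm2_pos[OF g False] unfolding rayleigh_energy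
        by (simp add: pos_less_divide_eq less_imp_le)
    qed
  qed auto
  then show False using big by simp
qed

lemma obtain_grid_range:
  fixes f :: "nat \<Rightarrow> real"
  assumes k: "1 \<le> k" and fin: "finite V" and f0: "\<And>v. v \<in> V \<Longrightarrow> 0 \<le> f v" and ne: "supp V f \<noteq> {}"
  obtains a0 n where "0 < a0" "\<And>v. v \<in> V \<Longrightarrow> 0 < f v \<Longrightarrow> grid k a0 (10 * k) \<le> f v"
    "\<And>v. v \<in> V \<Longrightarrow> f v < grid k a0 (5 * n)"
proof -
  let ?r = "1 + 1 / real k"
  have r0: "0 < ?r" by (simp add: add_pos_nonneg)
  define fmin where "fmin = Min (f ` supp V f)"
  have fin_supp: "finite (supp V f)" using fin unfolding supp_def by simp
  have "fmin \<in> f ` supp V f" unfolding fmin_def using fin_supp ne by simp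
  then have fmin0: "0 < fmin" using f0 unfolding supp_def by force
  have fmin_le: "fmin \<le> f v" if "v \<in> V" "0 < f v" for v
    unfolding fmin_def using fin_supp that by (auto simp: supp_def)
  define a0 where "a0 = fmin / ?r ^ (10 * k)"
  have a0: "0 < a0" unfolding a0_def using fmin0 r0 by simp
  have low: "grid k a0 (10 * k) = fmin" unfolding grid_def a0_def using r0 by simp
  obtain n where n: "Max (f ` V) / a0 < (?r ^ 5) ^ n"
    using real_arch_pow[of "?r ^ 5"] k by auto
  then have "Max (f ` V) < grid k a0 (5 * n)"
    using a0 by (simp add: pos_divide_less_eq grid_def power_mult[symmetric] mult.commute)
  moreover have "f v \<le> Max (f ` V)" if "v \<in> V" for v using fin that by simp
  ultimately show ?thesis
    using that[OF a0] fmin_le unfolding low by (meson le_less_trans)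
qed

lemma one_plus_power5_le: "0 \<le> x \<Longrightarrow> x \<le> 1 \<Longrightarrow> (1 + x) ^ 5 \<le> 1 + 31 * (x :: real)"
proof -
  assume x: "0 \<le> x" "x \<le> 1"
  have "x ^ 2 \<le> 1" "x ^ 3 \<le> 1" "x ^ 4 \<le> 1" using x by (auto intro: power_le_one)
  then have "5 + 10 * x + 10 * x ^ 2 + 5 * x ^ 3 + x ^ 4 \<le> 31" using x by linarith
  then have "x * (5 + 10 * x + 10 * x ^ 2 + 5 * x ^ 3 + x ^ 4) \<le> x * 31"
    using x by (intro mult_left_mono) auto
  then show ?thesis
    by (simp add: algebra_simps power2_eq_square power3_eq_cube power4_eq_xxxx eval_nat_numeral)
qed

lemma window_width_bounds:
  assumes k: "1 \<le> k" and a0: "0 < a0"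
  shows "grid k a0 (5 * m) / real k \<le> grid k a0 (5 * m + 5) - grid k a0 (5 * m)"
    and "grid k a0 (5 * m + 5) - grid k a0 (5 * m) \<le> 31 * grid k a0 (5 * m) / real k"
proof -
  define x where "x = 1 / real k"
  have x: "0 \<le> x" "x \<le> 1" using k unfolding x_def by auto
  have width: "grid k a0 (5 * m + 5) - grid k a0 (5 * m) = grid k a0 (5 * m) * ((1 + x) ^ 5 - 1)"
    using grid_add[of k a0 "5 * m" 5] unfolding x_def by (simp add: algebra_simps)
  have "1 + 5 * x \<le> (1 + x) ^ 5"
    using Bernoulli_inequality[of x 5] x by simp
  then have "x \<le> (1 + x) ^ 5 - 1" using x by linarith
  then show "grid k a0 (5 * m) / real k \<le> grid k a0 (5 * m + 5) - grid k a0 (5 * m)"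
    unfolding width using mult_left_mono[of x _ "grid k a0 (5 * m)"] grid_pos[OF a0, of k "5 * m"]
    by (simp add: x_def)
  show "grid k a0 (5 * m + 5) - grid k a0 (5 * m) \<le> 31 * grid k a0 (5 * m) / real k"
    unfolding width using mult_left_mono[OF one_plus_power5_le[OF x], of "grid k a0 (5 * m)"]
      grid_pos[OF a0, of k "5 * m"] by (simp add: algebra_simps x_def)
qed

lemma supp_window_bump_disjoint:
  assumes a0: "0 < a0" and "m \<noteq> m'"
  shows "supp V (window_bump k a0 f m) \<inter> supp V (window_bump k a0 f m') = {}"
proof -
  have "supp V (window_bump k a0 f i) \<inter> supp V (window_bump k a0 f j) = {}" if "i < j" for i j
    using supp_window_bump[of V k a0 f i] supp_window_bump[of V k a0 f j]
      grid_mono[OF a0, of "5 * i + 5" "5 * j" k] that by fastforce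
  then show ?thesis
    using \<open>m \<noteq> m'\<close> by (cases "m < m'") (simp, metis Int_commute not_less_iff_gr_or_eq)
qed

lemma window_bump_in_window:
  assumes k: "1 \<le> k" and a0: "0 < a0"
  shows "\<exists>a b. 0 < a \<and> a < b \<and> a / real k \<le> b - a \<and> b - a \<le> 31 * a / real k \<and>
    supp V (window_bump k a0 f m) \<subseteq> {v\<in>V. a \<le> f v \<and> f v \<le> b}"
proof (intro exI conjI)
  let ?a = "grid k a0 (5 * m)" and ?b = "grid k a0 (5 * m + 5)"
  show "0 < ?a" by (rule grid_pos[OF a0])
  show "?a / real k \<le> ?b - ?a" "?b - ?a \<le> 31 * ?a / real k"
    using window_width_bounds[OF k a0] by auto
  moreover have "0 < ?a / real k" using grid_pos[OF a0, of k "5 * m"] k by simp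
  ultimately show "?a < ?b" by linarith
  show "supp V (window_bump k a0 f m) \<subseteq> {v\<in>V. ?a \<le> f v \<and> f v \<le> ?b}"
    using supp_window_bump[of V k a0 f m] by fastforce
qed

lemma supp_window_bump_subset: "0 < a0 \<Longrightarrow> supp V (window_bump k a0 f m) \<subseteq> supp V f"
  using supp_window_bump[of V k a0 f m] grid_pos[of a0 k "5 * m"] unfolding supp_def by force

lemma small_fconductance_or_disjoint_windows:
  fixes f :: "nat \<Rightarrow> real"
  assumes g: "wgraph V W" and k: "1 \<le> k" and f0: "\<And>v. v \<in> V \<Longrightarrow> 0 \<le> f v"
    and half: "vol V W (supp V f) \<le> vol V W V / 2" and R: "0 < rayleigh V W f"
  shows "fconductance V W f \<le> (48 * exp 30)\<^sup>2 * real k * rayleigh V W f \<or>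
    (\<exists>fs :: nat \<Rightarrow> nat \<Rightarrow> real.
       (\<forall>i<k. \<forall>j<k. i \<noteq> j \<longrightarrow> supp V (fs i) \<inter> supp V (fs j) = {}) \<and>
       (\<forall>i<k. supp V (fs i) \<noteq> {} \<and> supp V (fs i) \<subseteq> supp V f \<and>
          rayleigh V W (fs i) \<le> (48 * exp 30)\<^sup>2 * (real k)\<^sup>2 * rayleigh V W f
            / ((fconductance V W f)\<^sup>2 / rayleigh V W f) \<and>
          (\<exists>a b. 0 < a \<and> a < b \<and> a / real k \<le> b - a \<and> b - a \<le> 31 * a / real k \<and>
             supp V (fs i) \<subseteq> {v\<in>V. a \<le> f v \<and> f v \<le> b})))"
proof (cases "fconductance V W f \<le> (48 * exp 30)\<^sup>2 * real k * rayleigh V W f")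
  case False
  define \<phi> R where "\<phi> = fconductance V W f" and "R = rayleigh V W f"
  have "16 * exp 30 \<le> (48 * exp 30 :: real)\<^sup>2"
    using one_le_exp_iff[of 30] by (simp add: power2_eq_square, linarith)
  then have "16 * exp 30 * (real k * R) \<le> (48 * exp 30)\<^sup>2 * (real k * R)"
    using R unfolding R_def by (intro mult_right_mono) auto
  moreover have "(48 * exp 30)\<^sup>2 * (real k * R) < \<phi>"
    using False unfolding \<phi>_def R_def by (simp add: mult.assoc)
  ultimately have big: "16 * exp 30 * real k * R < \<phi>" by (simp only: mult.assoc)
  moreover have "0 \<le> 16 * exp 30 * real k * R" using R unfolding R_def by simp
  ultimately have \<phi>0: "0 < \<phi>" by linarith
  obtain a0 n where a0: "0 < a0"
    and low: "\<And>v. v \<in> V \<Longrightarrow> 0 < f v \<Longrightarrow> grid k a0 (10 * k) \<le> f v"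
    and top: "\<And>v. v \<in> V \<Longrightarrow> f v < grid k a0 (5 * n)"
    using obtain_grid_range[OF k _ f0 supp_nonempty_of_rayleigh_pos[OF R]] g
    unfolding wgraph_def by blast
  define G where "G = {m\<in>{..<n}. supp V (window_bump k a0 f m) \<noteq> {} \<and>
      rayleigh V W (window_bump k a0 f m) \<le> (48 * exp 30 * real k * R / \<phi>)\<^sup>2}"
  have "card {..<k} \<le> card G"
    using many_good_windows[OF g k f0 half R _ a0 low top] big unfolding G_def \<phi>_def R_def by simp
  then obtain h where h: "h ` {..<k} \<subseteq> G" "inj_on h {..<k}"
    using card_le_inj[of "{..<k}" G] unfolding G_def by auto
  have "(48 * exp 30 * real k * R / \<phi>)\<^sup>2 = (48 * exp 30)\<^sup>2 * (real k)\<^sup>2 * R / (\<phi>\<^sup>2 / R)"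
    using R \<phi>0 unfolding R_def by (simp add: power2_eq_square field_simps)
  then have good: "supp V (window_bump k a0 f (h i)) \<noteq> {} \<and>
      rayleigh V W (window_bump k a0 f (h i)) \<le> (48 * exp 30)\<^sup>2 * (real k)\<^sup>2 * rayleigh V W f
        / ((fconductance V W f)\<^sup>2 / rayleigh V W f)" if "i < k" for i
    using h(1) that unfolding G_def \<phi>_def R_def by auto
  have disjoint: "supp V (window_bump k a0 f (h i)) \<inter> supp V (window_bump k a0 f (h j)) = {}"
    if "i < k" "j < k" "i \<noteq> j" for i j
    using that h(2) by (intro supp_window_bump_disjoint[OF a0]) (auto simp: inj_on_def)
  show ?thesis
    using good disjoint supp_window_bump_subset[OF a0] window_bump_in_window[OF k a0]
    by (intro disjI2 exI[of _ "\<lambda>i. window_bump k a0 f (h i)"]) blast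
qed simp

theorem mainTheorem9:
  shows "\<exists>C c1 c2 :: real. C > 0 \<and> c1 > 0 \<and> c2 > 0 \<and>
    (\<forall>(V :: nat set) W (k :: nat) (f :: nat \<Rightarrow> real).
      wgraph V W \<longrightarrow> k \<ge> 1 \<longrightarrow> (\<forall>v\<in>V. f v \<ge> 0) \<longrightarrow>
      vol V W (supp V f) \<le> vol V W V / 2 \<longrightarrow> rayleigh V W f > 0 \<longrightarrow>
      (let \<delta> = (fconductance V W f)\<^sup>2 / rayleigh V W f in
        fconductance V W f \<le> C * real k * rayleigh V W f \<or>
        (\<exists>fs :: nat \<Rightarrow> nat \<Rightarrow> real.
           (\<forall>i<k. \<forall>j<k. i \<noteq> j \<longrightarrow> supp V (fs i) \<inter> supp V (fs j) = {}) \<and>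
           (\<forall>i<k. supp V (fs i) \<noteq> {} \<and> supp V (fs i) \<subseteq> supp V f \<and>
              rayleigh V W (fs i) \<le> C * (real k)\<^sup>2 * rayleigh V W f / \<delta> \<and>
              (\<exists>a b :: real. 0 < a \<and> a < b \<and>
                 c1 * a / real k \<le> b - a \<and> b - a \<le> c2 * a / real k \<and>
                 supp V (fs i) \<subseteq> {v\<in>V. a \<le> f v \<and> f v \<le> b})))))"
proof (rule exI[of _ "(48 * exp 30)\<^sup>2"], rule exI[of _ 1], rule exI[of _ 31],
    intro conjI allI impI, goal_cases)
  case (4 V W k f)
  then show ?case
    using small_fconductance_or_disjoint_windows[where V=V and W=W and k=k and f=f] unfolding Let_def by simp
qed simp_all

end
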